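(* Let $n\ge1$, $\tau\in\mathbb R$, and let $P_1,\dots,P_J$ be Hermitian operators on $(\mathbb C^2)^{\otimes n}$, each equal to $\pm P$ for some non-identity Pauli string $P\in\{I,X,Y,Z\}^{\otimes n}\setminus\{I^{\otimes n}\}$. Define $$A=\Big(\prod_{j=1}^{J} e^{-\tau P_j}\Big)\,\mathbb I\,\Big(\prod_{j=J}^{1} e^{-\tau P_j}\Big),$$ where the first product is ordered $e^{-\tau P_1}e^{-\tau P_2}\cdots e^{-\tau P_J}$ and the second $e^{-\tau P_J}\cdots e^{-\tau P_1}$. Then $\operatorname{Tr}[A]\ge 2^n$. *)

theory Defs
  imports Complex_Main "Jordan_Normal_Form.Matrix"
begin

definition kron :: "'a::times mat \<Rightarrow> 'a mat \<Rightarrow> 'a mat" where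
  "kron A B = mat (dim_row A * dim_row B) (dim_col A * dim_col B)
     (\<lambda>(i,j). A $$ (i div dim_row B, j div dim_col B) * B $$ (i mod dim_row B, j mod dim_col B))"

datatype pauli = PI | PX | PY | PZ

fun pauli_mat :: "pauli \<Rightarrow> complex mat" where
  "pauli_mat PI = mat_of_rows_list 2 [[1, 0], [0, 1]]"
| "pauli_mat PX = mat_of_rows_list 2 [[0, 1], [1, 0]]"
| "pauli_mat PY = mat_of_rows_list 2 [[0, - \<i>], [\<i>, 0]]"
| "pauli_mat PZ = mat_of_rows_list 2 [[1, 0], [0, -1]]"

definition pauli_string :: "pauli list \<Rightarrow> complex mat" where
  "pauli_string ps = foldr (\<lambda>p M. kron (pauli_mat p) M) ps (1\<^sub>m 1)"

definition mat_exp :: "complex mat \<Rightarrow> complex mat" where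
  "mat_exp A = mat (dim_row A) (dim_col A)
     (\<lambda>(i,j). \<Sum>k. (A ^\<^sub>m k) $$ (i,j) / of_nat (fact k))"

definition mat_prod_list :: "nat \<Rightarrow> complex mat list \<Rightarrow> complex mat" where
  "mat_prod_list N Ms = foldr (\<lambda>M R. M * R) Ms (1\<^sub>m N)"

definition mat_trace :: "complex mat \<Rightarrow> complex" where
  "mat_trace A = (\<Sum>i<dim_row A. A $$ (i,i))"

end

theory Submission
  imports Defs "Jordan_Normal_Form.Schur_Decomposition" "HOL-Analysis.Convex"
begin

(* Since P_j^2 = I, the factor e^(-\<tau> P_j) equals cosh \<tau> I - sinh \<tau> P_j. It is Hermitian, and its
   determinant is 1: the eigenvalues of P_j are 1 and -1 and sum to tr P_j = 0, so the determinant
   is exp (-\<tau> tr P_j). Hence A = M M^* with M = e^(-\<tau> P_1) ... e^(-\<tau> P_J) is positive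
   semidefinite with determinant 1, and the AM-GM inequality for its eigenvalues gives tr A \<ge> 2^n. *)

lemma mult_add_less_mult: "p < a \<Longrightarrow> q < b \<Longrightarrow> p * b + q < a * (b :: nat)"
proof -
  assume "p < a" "q < b"
  then have "p * b + q < (p + 1) * b" by simp
  also have "\<dots> \<le> a * b" using \<open>p < a\<close> by (intro mult_right_mono) auto
  finally show ?thesis .
qed

lemma div_mod_less_of_less_mult:
  assumes "i < a * (b :: nat)"
  shows "i div b < a" "i mod b < b"
proof -
  from assms have "0 < b" by (cases b) auto
  with assms show "i div b < a" "i mod b < b" by (simp_all add: less_mult_imp_div_less)
qed

lemma sum_lessThan_mult:
  fixes a b :: nat
  shows "(\<Sum>k < a * b. f k) = (\<Sum>p < a. \<Sum>q < b. f (p * b + q))"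
proof -
  have block: "sum f {m..<m + b} = (\<Sum>q < b. f (m + q))" for m
    by (subst sum.atLeastLessThan_shift_0) (simp add: lessThan_atLeast0 comp_def)
  show ?thesis
    unfolding sum.nat_group[of f b a, symmetric] block ..
qed

lemma mult_mat_index_sum:
  fixes A :: "'a :: semiring_0 mat"
  shows "A \<in> carrier_mat n m \<Longrightarrow> B \<in> carrier_mat m p \<Longrightarrow> i < n \<Longrightarrow> j < p \<Longrightarrow>
   (A * B) $$ (i, j) = (\<Sum>k < m. A $$ (i, k) * B $$ (k, j))"
  by (simp add: scalar_prod_def lessThan_atLeast0)

lemma index_mult_mat_2:
  assumes "A \<in> carrier_mat n 2" "B \<in> carrier_mat 2 m" "i < n" "j < m"
  shows "(A * B) $$ (i, j) = A $$ (i, 0) * B $$ (0, j) + A $$ (i, 1) * B $$ (1, j)"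
  unfolding mult_mat_index_sum[OF assms] by (simp add: numeral_2_eq_2)

lemma mult_mat_vec_index_sum:
  fixes A :: "'a :: semiring_0 mat"
  shows "A \<in> carrier_mat n m \<Longrightarrow> v \<in> carrier_vec m \<Longrightarrow> i < n \<Longrightarrow>
   (A *\<^sub>v v) $ i = (\<Sum>k < m. A $$ (i, k) * v $ k)"
  by (simp add: scalar_prod_def lessThan_atLeast0)

lemma smult_smult_mat: "a \<cdot>\<^sub>m (b \<cdot>\<^sub>m A) = (a * b :: 'a :: semigroup_mult) \<cdot>\<^sub>m A"
  by (rule eq_matI) (auto simp: mult.assoc)

lemma pow_mat_smult:
  fixes A :: "'a :: comm_ring_1 mat"
  assumes A: "A \<in> carrier_mat n n"
  shows "(c \<cdot>\<^sub>m A) ^\<^sub>m k = c ^ k \<cdot>\<^sub>m A ^\<^sub>m k"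
proof (induction k)
  case 0
  then show ?case using A by (auto intro!: eq_matI)
next
  case (Suc k)
  have "(c \<cdot>\<^sub>m A) ^\<^sub>m Suc k = c ^ k \<cdot>\<^sub>m (A ^\<^sub>m k * (c \<cdot>\<^sub>m A))"
    using Suc.IH by (simp add: mult_smult_assoc_mat[OF pow_carrier_mat[OF A] smult_carrier_mat[OF A]])
  also have "\<dots> = c ^ Suc k \<cdot>\<^sub>m A ^\<^sub>m Suc k"
    by (simp add: mult_smult_distrib[OF pow_carrier_mat[OF A] A] smult_smult_mat mult.commute)
  finally show ?case .
qed

lemma pow_mat_involutory:
  assumes P: "P \<in> carrier_mat n n" and PP: "P * P = 1\<^sub>m n"
  shows "P ^\<^sub>m k = (if even k then 1\<^sub>m n else P)"
  by (induction k) (use P PP in auto)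

lemma mat_trace_smult: "A \<in> carrier_mat n n \<Longrightarrow> mat_trace (c \<cdot>\<^sub>m A) = c * mat_trace A"
  by (auto simp: mat_trace_def sum_distrib_left intro: sum.cong)

lemma mat_trace_mult_comm:
  assumes A: "A \<in> carrier_mat n m" and B: "B \<in> carrier_mat m n"
  shows "mat_trace (A * B) = mat_trace (B * A)"
proof -
  have "mat_trace (A * B) = (\<Sum>i < n. (A * B) $$ (i, i))"
    using A by (simp add: mat_trace_def)
  also have "\<dots> = (\<Sum>i < n. \<Sum>k < m. A $$ (i, k) * B $$ (k, i))"
    by (intro sum.cong refl mult_mat_index_sum[OF A B]) auto
  also have "\<dots> = (\<Sum>k < m. \<Sum>i < n. B $$ (k, i) * A $$ (i, k))"
    by (subst sum.swap) (simp add: mult.commute)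
  also have "\<dots> = (\<Sum>k < m. (B * A) $$ (k, k))"
    by (intro sum.cong refl mult_mat_index_sum[OF B A, symmetric]) auto
  also have "\<dots> = mat_trace (B * A)"
    using B by (simp add: mat_trace_def)
  finally show ?thesis .
qed

section \<open>Kronecker products\<close>

lemma dim_kron[simp]:
  "dim_row (kron A B) = dim_row A * dim_row B" "dim_col (kron A B) = dim_col A * dim_col B"
  by (simp_all add: kron_def)

lemma kron_carrier:
  "A \<in> carrier_mat a a' \<Longrightarrow> B \<in> carrier_mat b b' \<Longrightarrow> kron A B \<in> carrier_mat (a * b) (a' * b')"
  by auto

lemma index_kron:
  "i < dim_row A * dim_row B \<Longrightarrow> j < dim_col A * dim_col B \<Longrightarrow>
   kron A B $$ (i, j) = A $$ (i div dim_row B, j div dim_col B) * B $$ (i mod dim_row B, j mod dim_col B)"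
  by (simp add: kron_def)

lemma kron_mult:
  fixes A :: "'a :: comm_ring_1 mat"
  assumes A: "A \<in> carrier_mat a a'" and C: "C \<in> carrier_mat a' a''"
    and B: "B \<in> carrier_mat b b'" and D: "D \<in> carrier_mat b' b''"
  shows "kron A B * kron C D = kron (A * C) (B * D)"
proof (rule eq_matI)
  fix i j assume "i < dim_row (kron (A * C) (B * D))" "j < dim_col (kron (A * C) (B * D))"
  then have i: "i < a * b" and j: "j < a'' * b''" using A B C D by auto
  then have ij: "i div b < a" "i mod b < b" "j div b'' < a''" "j mod b'' < b''"
    by (simp_all add: div_mod_less_of_less_mult)
  have "(kron A B * kron C D) $$ (i, j) = (\<Sum>k < a' * b'. kron A B $$ (i, k) * kron C D $$ (k, j))"
    using i j by (rule mult_mat_index_sum[OF kron_carrier[OF A B] kron_carrier[OF C D]])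
  also have "\<dots> = (\<Sum>p < a'. \<Sum>q < b'. (A $$ (i div b, p) * C $$ (p, j div b''))
                                       * (B $$ (i mod b, q) * D $$ (q, j mod b'')))"
    unfolding sum_lessThan_mult
    by (intro sum.cong refl) (use i j A B C D in \<open>simp add: index_kron mult_add_less_mult\<close>)
  also have "\<dots> = (A * C) $$ (i div b, j div b'') * (B * D) $$ (i mod b, j mod b'')"
    using ij by (simp add: mult_mat_index_sum[OF A C] mult_mat_index_sum[OF B D] sum_product)
  also have "\<dots> = kron (A * C) (B * D) $$ (i, j)"
    using i j A B C D by (simp add: index_kron)
  finally show "(kron A B * kron C D) $$ (i, j) = kron (A * C) (B * D) $$ (i, j)" .
qed (use A B C D in auto)

lemma kron_one_mat: "kron (1\<^sub>m a) (1\<^sub>m b) = (1\<^sub>m (a * b) :: 'a :: ring_1 mat)"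
proof (rule eq_matI)
  fix i j assume "i < dim_row (1\<^sub>m (a * b) :: 'a mat)" "j < dim_col (1\<^sub>m (a * b) :: 'a mat)"
  then have i: "i < a * b" and j: "j < a * b" by auto
  then have "i div b < a" "i mod b < b" "j div b < a" "j mod b < b"
    by (simp_all add: div_mod_less_of_less_mult)
  moreover have "i = j \<longleftrightarrow> i div b = j div b \<and> i mod b = j mod b"
    by (metis div_mult_mod_eq)
  ultimately show "kron (1\<^sub>m a) (1\<^sub>m b) $$ (i, j) = (1\<^sub>m (a * b) :: 'a mat) $$ (i, j)"
    using i j by (simp add: index_kron)
qed auto

lemma mat_trace_kron:
  assumes A: "A \<in> carrier_mat a a" and B: "B \<in> carrier_mat b b"
  shows "mat_trace (kron A B) = mat_trace A * mat_trace B"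
proof -
  have "mat_trace (kron A B) = (\<Sum>p < a. \<Sum>q < b. kron A B $$ (p * b + q, p * b + q))"
    using A B unfolding mat_trace_def by (simp add: sum_lessThan_mult)
  also have "\<dots> = (\<Sum>p < a. \<Sum>q < b. A $$ (p, p) * B $$ (q, q))"
    by (intro sum.cong refl) (use A B in \<open>simp add: index_kron mult_add_less_mult\<close>)
  also have "\<dots> = mat_trace A * mat_trace B"
    using A B by (simp add: mat_trace_def sum_product)
  finally show ?thesis .
qed

section \<open>Adjoints\<close>

lemma dim_mat_adjoint[simp]:
  "dim_row (mat_adjoint A) = dim_col A" "dim_col (mat_adjoint A) = dim_row A"
  by (simp_all add: mat_adjoint_def)

lemma index_mat_adjoint[simp]:
  "i < dim_col A \<Longrightarrow> j < dim_row A \<Longrightarrow> mat_adjoint A $$ (i, j) = conjugate (A $$ (j, i))"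
  by (simp add: mat_adjoint_def mat_of_rows_index)

lemma mat_adjoint_carrier: "A \<in> carrier_mat n m \<Longrightarrow> mat_adjoint A \<in> carrier_mat m n"
  by auto

lemma conjugate_one[simp]: "conjugate (1 :: 'a :: conjugatable_field) = 1"
proof -
  have "conjugate 1 * conjugate (1 :: 'a) = conjugate 1 * 1"
    by (simp flip: conjugate_dist_mul)
  then show ?thesis by simp
qed

lemma mat_adjoint_one[simp]: "mat_adjoint (1\<^sub>m n) = (1\<^sub>m n :: 'a :: conjugatable_field mat)"
  by (rule eq_matI) auto

lemma mat_adjoint_add:
  "A \<in> carrier_mat n m \<Longrightarrow> B \<in> carrier_mat n m \<Longrightarrow>
   mat_adjoint (A + B) = mat_adjoint A + (mat_adjoint B :: 'a :: conjugatable_field mat)"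
  by (rule eq_matI) (auto simp: conjugate_dist_add)

lemma mat_adjoint_smult:
  "mat_adjoint (c \<cdot>\<^sub>m A) = conjugate c \<cdot>\<^sub>m (mat_adjoint A :: 'a :: conjugatable_field mat)"
  by (rule eq_matI) (auto simp: conjugate_dist_mul)

lemma mat_adjoint_mult:
  fixes A :: "'a :: conjugatable_field mat"
  assumes A: "A \<in> carrier_mat n m" and B: "B \<in> carrier_mat m p"
  shows "mat_adjoint (A * B) = mat_adjoint B * mat_adjoint A"
proof (rule eq_matI)
  fix i j assume "i < dim_row (mat_adjoint B * mat_adjoint A)" "j < dim_col (mat_adjoint B * mat_adjoint A)"
  then have i: "i < p" and j: "j < n" using A B by auto
  have "mat_adjoint (A * B) $$ (i, j) = conjugate (\<Sum>k < m. A $$ (j, k) * B $$ (k, i))"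
    using i j A B by (simp add: mult_mat_index_sum[OF A B j i])
  also have "\<dots> = (\<Sum>k < m. mat_adjoint B $$ (i, k) * mat_adjoint A $$ (k, j))"
    using i j A B by (simp add: sum_conjugate conjugate_dist_mul mult.commute)
  also have "\<dots> = (mat_adjoint B * mat_adjoint A) $$ (i, j)"
    using i j by (rule mult_mat_index_sum[OF mat_adjoint_carrier[OF B] mat_adjoint_carrier[OF A], symmetric])
  finally show "mat_adjoint (A * B) $$ (i, j) = (mat_adjoint B * mat_adjoint A) $$ (i, j)" .
qed (use A B in auto)

lemma mat_adjoint_kron:
  "mat_adjoint (kron A B) = kron (mat_adjoint A) (mat_adjoint B :: 'a :: conjugatable_field mat)"
proof (rule eq_matI)
  fix i j
  assume "i < dim_row (kron (mat_adjoint A) (mat_adjoint B))"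
    and "j < dim_col (kron (mat_adjoint A) (mat_adjoint B))"
  then have i: "i < dim_col A * dim_col B" and j: "j < dim_row A * dim_row B" by auto
  then show "mat_adjoint (kron A B) $$ (i, j) = kron (mat_adjoint A) (mat_adjoint B) $$ (i, j)"
    by (simp add: index_kron div_mod_less_of_less_mult conjugate_dist_mul)
qed auto

lemma mat_adjoint_cscalar_prod:
  fixes A :: "'a :: conjugatable_field mat"
  assumes A: "A \<in> carrier_mat n m" and u: "u \<in> carrier_vec m" and w: "w \<in> carrier_vec n"
  shows "(A *\<^sub>v u) \<bullet>c w = u \<bullet>c (mat_adjoint A *\<^sub>v w)"
proof -
  have "(A *\<^sub>v u) \<bullet>c w = (\<Sum>i < n. (\<Sum>k < m. A $$ (i, k) * u $ k) * conjugate (w $ i))"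
    using A u w by (simp add: scalar_prod_def lessThan_atLeast0 mult_mat_vec_index_sum)
  also have "\<dots> = (\<Sum>k < m. u $ k * (\<Sum>i < n. A $$ (i, k) * conjugate (w $ i)))"
    by (simp add: sum_distrib_left sum_distrib_right ac_simps) (rule sum.swap)
  also have "\<dots> = u \<bullet>c (mat_adjoint A *\<^sub>v w)"
    using A u w by (simp add: scalar_prod_def lessThan_atLeast0 mult_mat_vec_index_sum[OF mat_adjoint_carrier[OF A] w]
        sum_conjugate conjugate_dist_mul)
  finally show ?thesis .
qed

section \<open>Pauli strings\<close>

lemma pauli_mat_carrier: "pauli_mat p \<in> carrier_mat 2 2"
  by (cases p) (auto simp: mat_of_rows_list_def)

lemma pauli_mat_involutory: "pauli_mat p * pauli_mat p = 1\<^sub>m 2"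
proof (rule eq_matI)
  fix i j assume "i < dim_row (1\<^sub>m 2 :: complex mat)" "j < dim_col (1\<^sub>m 2 :: complex mat)"
  then have i: "i < 2" and j: "j < 2" by auto
  have "(pauli_mat p * pauli_mat p) $$ (i, j)
        = pauli_mat p $$ (i, 0) * pauli_mat p $$ (0, j) + pauli_mat p $$ (i, 1) * pauli_mat p $$ (1, j)"
    using i j by (rule index_mult_mat_2[OF pauli_mat_carrier pauli_mat_carrier])
  also have "\<dots> = (1\<^sub>m 2 :: complex mat) $$ (i, j)"
    using less_2_cases[OF i] less_2_cases[OF j] by (cases p) (auto simp: mat_of_rows_list_def)
  finally show "(pauli_mat p * pauli_mat p) $$ (i, j) = (1\<^sub>m 2 :: complex mat) $$ (i, j)" .
qed (use pauli_mat_carrier[of p] in auto)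

lemma mat_adjoint_pauli_mat: "mat_adjoint (pauli_mat p) = pauli_mat p"
proof (rule eq_matI)
  fix i j assume "i < dim_row (pauli_mat p)" "j < dim_col (pauli_mat p)"
  then have i: "i < 2" and j: "j < 2" using pauli_mat_carrier[of p] by auto
  then have "mat_adjoint (pauli_mat p) $$ (i, j) = cnj (pauli_mat p $$ (j, i))"
    using pauli_mat_carrier[of p] by simp
  also have "\<dots> = pauli_mat p $$ (i, j)"
    using less_2_cases[OF i] less_2_cases[OF j] by (cases p) (auto simp: mat_of_rows_list_def)
  finally show "mat_adjoint (pauli_mat p) $$ (i, j) = pauli_mat p $$ (i, j)" .
qed (use pauli_mat_carrier[of p] in auto)

lemma mat_trace_pauli_mat: "mat_trace (pauli_mat p) = (if p = PI then 2 else 0)"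
  by (cases p) (auto simp: mat_trace_def mat_of_rows_list_def numeral_2_eq_2)

lemma pauli_string_Cons: "pauli_string (p # s) = kron (pauli_mat p) (pauli_string s)"
  by (simp add: pauli_string_def)

lemma pauli_string_carrier: "pauli_string s \<in> carrier_mat (2 ^ length s) (2 ^ length s)"
proof (induction s)
  case (Cons p s)
  then show ?case
    using kron_carrier[OF pauli_mat_carrier Cons.IH] by (simp add: pauli_string_Cons)
qed (simp add: pauli_string_def)

lemma pauli_string_involutory: "pauli_string s * pauli_string s = 1\<^sub>m (2 ^ length s)"
proof (induction s)
  case (Cons p s)
  then show ?case
    by (simp add: pauli_string_Cons kron_mult[OF pauli_mat_carrier pauli_mat_carrier
          pauli_string_carrier pauli_string_carrier] pauli_mat_involutory kron_one_mat)
qed (simp add: pauli_string_def)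

lemma mat_adjoint_pauli_string: "mat_adjoint (pauli_string s) = pauli_string s"
  by (induction s) (simp_all add: pauli_string_def pauli_string_Cons mat_adjoint_kron mat_adjoint_pauli_mat)

lemma mat_trace_pauli_string:
  "s \<noteq> replicate (length s) PI \<Longrightarrow> mat_trace (pauli_string s) = 0"
  by (induction s)
    (auto simp: pauli_string_Cons mat_trace_kron[OF pauli_mat_carrier pauli_string_carrier] mat_trace_pauli_mat)

lemma signed_pauli_string:
  fixes s :: "pauli list" and \<sigma> :: complex
  assumes "\<sigma> \<in> {1, -1}"
  defines "P \<equiv> \<sigma> \<cdot>\<^sub>m pauli_string s"
  shows "P \<in> carrier_mat (2 ^ length s) (2 ^ length s)"
    and "P * P = 1\<^sub>m (2 ^ length s)"
    and "mat_adjoint P = P"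
    and "s \<noteq> replicate (length s) PI \<Longrightarrow> mat_trace P = 0"
proof -
  note S = pauli_string_carrier[of s]
  show "P \<in> carrier_mat (2 ^ length s) (2 ^ length s)"
    unfolding P_def using S by simp
  have "P * P = \<sigma> \<cdot>\<^sub>m (pauli_string s * (\<sigma> \<cdot>\<^sub>m pauli_string s))"
    unfolding P_def by (rule mult_smult_assoc_mat[OF S smult_carrier_mat[OF S]])
  also have "\<dots> = (\<sigma> * \<sigma>) \<cdot>\<^sub>m (pauli_string s * pauli_string s)"
    by (simp add: mult_smult_distrib[OF S S] smult_smult_mat)
  also have "\<dots> = 1\<^sub>m (2 ^ length s)"
    using assms(1) by (auto simp: pauli_string_involutory)
  finally show "P * P = 1\<^sub>m (2 ^ length s)" .
  show "mat_adjoint P = P"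
    using assms(1) by (auto simp: P_def mat_adjoint_smult mat_adjoint_pauli_string)
  show "mat_trace P = 0" if "s \<noteq> replicate (length s) PI"
    unfolding P_def using S that by (simp add: mat_trace_smult mat_trace_pauli_string)
qed

section \<open>Triangularization and spectra\<close>

lemma complex_mat_triangularizable:
  fixes A :: "complex mat"
  assumes A: "A \<in> carrier_mat n n"
  obtains B P Q where "similar_mat_wit A B P Q" and "upper_triangular B"
proof -
  obtain es where "char_poly A = (\<Prod>a \<leftarrow> es. [:- a, 1:])"
    using char_poly_factorized[OF A] by blast
  from schur_upper_triangular[OF A this]
  have "upper_triangular (schur_upper_triangular A es)" "similar_mat A (schur_upper_triangular A es)"
    by auto
  then show thesis using that unfolding similar_mat_def by blast
qed

lemma mat_trace_similar_mat_wit: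
  assumes "similar_mat_wit A B P Q"
  shows "mat_trace A = mat_trace B"
proof -
  define n where "n = dim_row A"
  note wit = similar_mat_witD[OF n_def assms]
  have "mat_trace A = mat_trace (P * B * Q)"
    using wit(3) by (rule arg_cong)
  also have "\<dots> = mat_trace (Q * (P * B))"
    using wit(5-7) by (intro mat_trace_mult_comm) auto
  also have "Q * (P * B) = B"
    using wit(2,5-7) by (simp flip: assoc_mult_mat[of Q n n P n B n])
  finally show ?thesis .
qed

lemma eigenvalue_diag_similar_upper_triangular:
  fixes A :: "'a :: field mat"
  assumes sim: "similar_mat A B" and ut: "upper_triangular B" and B: "B \<in> carrier_mat n n"
    and i: "i < n"
  shows "eigenvalue A (B $$ (i, i))"
proof -
  have A: "A \<in> carrier_mat n n" using similar_matD[OF sim] B by auto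
  have "B $$ (i, i) \<in> set (diag_mat B)" using B i by (auto simp: diag_mat_def)
  then have "poly (char_poly B) (B $$ (i, i)) = 0"
    unfolding char_poly_upper_triangular[OF B ut] by (auto simp: poly_prod_list prod_list_zero_iff)
  then show ?thesis
    unfolding eigenvalue_root_char_poly[OF A] char_poly_similar[OF sim] .
qed

lemma eigenvalue_involutory:
  fixes P :: "'a :: field mat"
  assumes P: "P \<in> carrier_mat n n" and PP: "P * P = 1\<^sub>m n" and ev: "eigenvalue P e"
  shows "e = 1 \<or> e = -1"
proof -
  obtain v where v: "v \<in> carrier_vec n" "v \<noteq> 0\<^sub>v n" and Pv: "P *\<^sub>v v = e \<cdot>\<^sub>v v"
    using ev P unfolding eigenvalue_def eigenvector_def by auto
  obtain i where i: "i < n" "v $ i \<noteq> 0"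
    using v by (metis eq_vecI carrier_vecD index_zero_vec)
  have "v = (P * P) *\<^sub>v v" using PP v by simp
  also have "\<dots> = (e * e) \<cdot>\<^sub>v v"
    using P v Pv by (simp add: mult_mat_vec smult_smult_assoc)
  finally have "v $ i = ((e * e) \<cdot>\<^sub>v v) $ i" by (rule arg_cong)
  then have "v $ i = e * e * v $ i" using v i by simp
  then have "e * e = 1" using i by simp
  then show ?thesis by (metis power2_eq_1_iff power2_eq_square)
qed

lemma similar_mat_wit_affine:
  fixes A :: "'a :: comm_ring_1 mat"
  assumes wit: "similar_mat_wit A B P Q" and A: "A \<in> carrier_mat n n"
  shows "similar_mat_wit (a \<cdot>\<^sub>m 1\<^sub>m n + b \<cdot>\<^sub>m A) (a \<cdot>\<^sub>m 1\<^sub>m n + b \<cdot>\<^sub>m B) P Q"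
proof -
  note w = similar_mat_witD2[OF A wit]
  have "P * (a \<cdot>\<^sub>m 1\<^sub>m n + b \<cdot>\<^sub>m B) = a \<cdot>\<^sub>m P + b \<cdot>\<^sub>m (P * B)"
    using w by (simp add: mult_add_distrib_mat[of P n n _ n] mult_smult_distrib[of P n n _ n]
        right_mult_one_mat[of P n n])
  then have "P * (a \<cdot>\<^sub>m 1\<^sub>m n + b \<cdot>\<^sub>m B) * Q = a \<cdot>\<^sub>m (P * Q) + b \<cdot>\<^sub>m (P * B * Q)"
    using w by (simp add: add_mult_distrib_mat[of _ n n _ Q n] mult_smult_assoc_mat[of _ n n Q n]
        del: assoc_mult_mat)
  also have "\<dots> = a \<cdot>\<^sub>m 1\<^sub>m n + b \<cdot>\<^sub>m A"
    using w(1,3) by simp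
  finally show ?thesis
    using w by (intro similar_mat_witI[of P Q n]) auto
qed

lemma det_affine_upper_triangular:
  assumes B: "B \<in> carrier_mat n n" and ut: "upper_triangular B"
  shows "det (a \<cdot>\<^sub>m 1\<^sub>m n + b \<cdot>\<^sub>m B) = (\<Prod>i < n. a + b * B $$ (i, i))"
proof -
  have "upper_triangular (a \<cdot>\<^sub>m 1\<^sub>m n + b \<cdot>\<^sub>m B)"
    using ut B unfolding upper_triangular_def by auto
  then show ?thesis
    using B by (simp add: det_upper_triangular[of _ n] prod_list_diag_prod atLeast0LessThan)
qed

lemma det_cosh_sinh_involutory:
  assumes P: "P \<in> carrier_mat n n" and PP: "P * P = 1\<^sub>m n" and tr: "mat_trace P = 0"
  shows "det (complex_of_real (cosh x) \<cdot>\<^sub>m 1\<^sub>m n + complex_of_real (sinh x) \<cdot>\<^sub>m P) = 1"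
proof -
  obtain B U V where wit: "similar_mat_wit P B U V" and ut: "upper_triangular B"
    using complex_mat_triangularizable[OF P] .
  have B: "B \<in> carrier_mat n n" using similar_mat_witD2[OF P wit] by auto
  define r where "r i = Re (B $$ (i, i))" for i
  have factor: "complex_of_real (cosh x) + complex_of_real (sinh x) * B $$ (i, i)
      = complex_of_real (exp (x * r i))" if i: "i < n" for i
  proof -
    have "eigenvalue P (B $$ (i, i))"
      using wit ut B i by (intro eigenvalue_diag_similar_upper_triangular) (auto simp: similar_mat_def)
    then have "B $$ (i, i) = 1 \<or> B $$ (i, i) = -1"
      by (rule eigenvalue_involutory[OF P PP])
    then show ?thesis
      by (auto simp: r_def simp flip: cosh_plus_sinh cosh_minus_sinh)
  qed
  have "det (complex_of_real (cosh x) \<cdot>\<^sub>m 1\<^sub>m n + complex_of_real (sinh x) \<cdot>\<^sub>m P)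
      = (\<Prod>i < n. complex_of_real (cosh x) + complex_of_real (sinh x) * B $$ (i, i))"
    using similar_mat_wit_affine[OF wit P] det_affine_upper_triangular[OF B ut]
    by (metis det_similar similar_mat_def)
  also have "\<dots> = complex_of_real (exp (x * (\<Sum>i < n. r i)))"
    by (simp add: factor exp_sum sum_distrib_left)
  also have "(\<Sum>i < n. r i) = Re (mat_trace B)"
    using B by (simp add: r_def mat_trace_def)
  also have "mat_trace B = 0"
    using mat_trace_similar_mat_wit[OF wit] tr by simp
  finally show ?thesis by simp
qed

(* On complex numbers, \<le> is the order of HOL-Library.Complex_Order: e \<ge> 0 means that e is a
   nonnegative real number. *)
lemma eigenvalue_mult_mat_adjoint_nonneg:
  fixes M :: "complex mat"
  assumes M: "M \<in> carrier_mat n m" and ev: "eigenvalue (M * mat_adjoint M) e"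
  shows "e \<ge> 0"
proof -
  obtain v where v: "v \<in> carrier_vec n" "v \<noteq> 0\<^sub>v n" and eq: "(M * mat_adjoint M) *\<^sub>v v = e \<cdot>\<^sub>v v"
    using ev M unfolding eigenvalue_def eigenvector_def by auto
  define u where "u = mat_adjoint M *\<^sub>v v"
  have u: "u \<in> carrier_vec m"
    unfolding u_def using mat_adjoint_carrier[OF M] v(1) by (rule mult_mat_vec_carrier)
  have "M *\<^sub>v u = e \<cdot>\<^sub>v v"
    unfolding u_def using assoc_mult_mat_vec[OF M mat_adjoint_carrier[OF M] v(1)] eq by simp
  then have "e * (v \<bullet>c v) = (M *\<^sub>v u) \<bullet>c v"
    using v by simp
  also have "\<dots> = u \<bullet>c u"
    using mat_adjoint_cscalar_prod[OF M u v(1)] unfolding u_def by simp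
  finally have "e * (v \<bullet>c v) = u \<bullet>c u" .
  moreover have "v \<bullet>c v > 0" "u \<bullet>c u \<ge> 0" using v u by auto
  ultimately show ?thesis
    by (auto simp: less_eq_complex_def less_complex_def complex_eq_iff) (metis mult_neg_pos not_le)
qed

lemma card_le_sum_of_prod_eq_1:
  fixes x :: "'a \<Rightarrow> real"
  assumes S: "finite S" and nonneg: "\<And>i. i \<in> S \<Longrightarrow> 0 \<le> x i" and prod: "(\<Prod>i \<in> S. x i) = 1"
  shows "real (card S) \<le> (\<Sum>i \<in> S. x i)"
proof (cases "S = {}")
  case False
  then have "1 \<le> (\<Sum>i \<in> S. x i / card S)"
    using arith_geom_mean[where x = x, OF S False nonneg] prod by simp
  also have "\<dots> = (\<Sum>i \<in> S. x i) / card S"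
    by (simp add: sum_divide_distrib)
  finally have "1 \<le> (\<Sum>i \<in> S. x i) / card S" .
  moreover have "0 < card S"
    using S False by (simp add: card_gt_0_iff)
  ultimately show ?thesis
    by (simp add: le_divide_eq_1_pos)
qed simp

lemma dim_le_mat_trace_of_det_1:
  fixes A :: "complex mat"
  assumes A: "A \<in> carrier_mat n n" and nonneg: "\<And>e. eigenvalue A e \<Longrightarrow> e \<ge> 0" and det: "det A = 1"
  shows "of_nat n \<le> mat_trace A"
proof -
  obtain B P Q where wit: "similar_mat_wit A B P Q" and ut: "upper_triangular B"
    using complex_mat_triangularizable[OF A] .
  have B: "B \<in> carrier_mat n n" using similar_mat_witD2[OF A wit] by auto
  define r where "r i = Re (B $$ (i, i))" for i
  have diag: "B $$ (i, i) = complex_of_real (r i)" "r i \<ge> 0" if i: "i < n" for i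
  proof -
    have "eigenvalue A (B $$ (i, i))"
      using wit ut B i by (intro eigenvalue_diag_similar_upper_triangular) (auto simp: similar_mat_def)
    then have "B $$ (i, i) \<ge> 0" by (rule nonneg)
    then show "B $$ (i, i) = complex_of_real (r i)" "r i \<ge> 0"
      by (auto simp: r_def less_eq_complex_def complex_eq_iff)
  qed
  have "complex_of_real (\<Prod>i < n. r i) = det B"
    using B ut diag by (simp add: det_upper_triangular[of _ n] prod_list_diag_prod atLeast0LessThan)
  also have "det B = 1"
    using det det_similar[of A B] wit by (auto simp: similar_mat_def)
  finally have prod: "(\<Prod>i < n. r i) = 1" by (simp only: of_real_eq_1_iff)
  have "real n \<le> (\<Sum>i < n. r i)"
    using card_le_sum_of_prod_eq_1[of "{..<n}" r] diag(2) prod by simp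
  moreover have "mat_trace A = complex_of_real (\<Sum>i < n. r i)"
    using mat_trace_similar_mat_wit[OF wit] B diag by (simp add: mat_trace_def)
  ultimately show ?thesis by (simp add: less_eq_complex_def)
qed

section \<open>Exponentials and ordered products\<close>

lemma mat_exp_smult_involutory:
  assumes P: "P \<in> carrier_mat n n" and PP: "P * P = 1\<^sub>m n"
  shows "mat_exp (complex_of_real x \<cdot>\<^sub>m P) =
    complex_of_real (cosh x) \<cdot>\<^sub>m 1\<^sub>m n + complex_of_real (sinh x) \<cdot>\<^sub>m P"
proof (rule eq_matI)
  fix i j
  assume "i < dim_row (complex_of_real (cosh x) \<cdot>\<^sub>m 1\<^sub>m n + complex_of_real (sinh x) \<cdot>\<^sub>m P)"
    and "j < dim_col (complex_of_real (cosh x) \<cdot>\<^sub>m 1\<^sub>m n + complex_of_real (sinh x) \<cdot>\<^sub>m P)"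
  then have i: "i < n" and j: "j < n" using P by auto
  define \<delta> where "\<delta> = (1\<^sub>m n :: complex mat) $$ (i, j)"
  have term_split: "((complex_of_real x \<cdot>\<^sub>m P) ^\<^sub>m k) $$ (i, j) / of_nat (fact k) =
     complex_of_real (if even k then x ^ k /\<^sub>R fact k else 0) * \<delta> +
     complex_of_real (if even k then 0 else x ^ k /\<^sub>R fact k) * P $$ (i, j)" for k
    using i j P unfolding pow_mat_smult[OF P] pow_mat_involutory[OF P PP] \<delta>_def
    by (auto simp: divide_inverse)
  have "(\<lambda>k. ((complex_of_real x \<cdot>\<^sub>m P) ^\<^sub>m k) $$ (i, j) / of_nat (fact k)) sums
     (complex_of_real (cosh x) * \<delta> + complex_of_real (sinh x) * P $$ (i, j))"
    unfolding term_split by (intro sums_add sums_mult2 sums_of_real cosh_converges sinh_converges)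
  then show "mat_exp (complex_of_real x \<cdot>\<^sub>m P) $$ (i, j) =
      (complex_of_real (cosh x) \<cdot>\<^sub>m 1\<^sub>m n + complex_of_real (sinh x) \<cdot>\<^sub>m P) $$ (i, j)"
    using i j P by (simp add: mat_exp_def sums_iff \<delta>_def)
qed (use P in \<open>auto simp: mat_exp_def\<close>)

lemma mat_exp_smult_hermitian_traceless_involution:
  fixes P :: "complex mat" and x :: real
  assumes P: "P \<in> carrier_mat n n" and PP: "P * P = 1\<^sub>m n"
    and herm: "mat_adjoint P = P" and tr: "mat_trace P = 0"
  defines "E \<equiv> mat_exp (complex_of_real x \<cdot>\<^sub>m P)"
  shows "E \<in> carrier_mat n n" and "mat_adjoint E = E" and "det E = 1"
proof -
  have E: "E = complex_of_real (cosh x) \<cdot>\<^sub>m 1\<^sub>m n + complex_of_real (sinh x) \<cdot>\<^sub>m P"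
    unfolding E_def by (rule mat_exp_smult_involutory[OF P PP])
  show "E \<in> carrier_mat n n"
    unfolding E using P by simp
  show "mat_adjoint E = E"
    unfolding E using P herm by (simp add: mat_adjoint_add[of _ n n] mat_adjoint_smult)
  show "det E = 1"
    unfolding E by (rule det_cosh_sinh_involutory[OF P PP tr])
qed

lemma dim_col_mat_prod_list[simp]: "dim_col (mat_prod_list n Ms) = n"
  by (induction Ms) (simp_all add: mat_prod_list_def)

lemma mat_prod_list_carrier:
  "\<forall>M \<in> set Ms. M \<in> carrier_mat n n \<Longrightarrow> mat_prod_list n Ms \<in> carrier_mat n n"
  by (induction Ms) (auto simp: mat_prod_list_def)

lemma mat_prod_list_snoc:
  assumes "\<forall>M \<in> set Ms. M \<in> carrier_mat n n" and "A \<in> carrier_mat n n"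
  shows "mat_prod_list n (Ms @ [A]) = mat_prod_list n Ms * A"
  using assms
proof (induction Ms)
  case (Cons M Ms)
  then have "mat_prod_list n (M # Ms @ [A]) = M * (mat_prod_list n Ms * A)"
    by (simp add: mat_prod_list_def)
  also have "\<dots> = M * mat_prod_list n Ms * A"
    using Cons.prems mat_prod_list_carrier[of Ms n] by (simp add: assoc_mult_mat[of M n n _ n A n])
  finally show ?case by (simp add: mat_prod_list_def)
qed (simp add: mat_prod_list_def)

lemma det_mat_prod_list:
  "\<forall>M \<in> set Ms. M \<in> carrier_mat n n \<Longrightarrow> det (mat_prod_list n Ms) = (\<Prod>M \<leftarrow> Ms. det M)"
proof (induction Ms)
  case (Cons M Ms)
  then show ?case
    using det_mult[of M n "mat_prod_list n Ms"] mat_prod_list_carrier[of Ms n]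
    by (simp add: mat_prod_list_def)
qed (simp add: mat_prod_list_def)

lemma mat_prod_list_rev_hermitian:
  assumes "\<forall>M \<in> set Ms. M \<in> carrier_mat n n \<and> mat_adjoint M = M"
  shows "mat_prod_list n (rev Ms) = mat_adjoint (mat_prod_list n Ms)"
  using assms
proof (induction Ms)
  case (Cons M Ms)
  then have M: "M \<in> carrier_mat n n" and Ms: "\<forall>M \<in> set Ms. M \<in> carrier_mat n n" by auto
  have "mat_prod_list n (rev (M # Ms)) = mat_adjoint (mat_prod_list n Ms) * mat_adjoint M"
    using Cons by (simp add: mat_prod_list_snoc[of "rev Ms"])
  also have "\<dots> = mat_adjoint (mat_prod_list n (M # Ms))"
    using mat_adjoint_mult[OF M mat_prod_list_carrier[OF Ms]] by (simp add: mat_prod_list_def)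
  finally show ?case .
qed (simp add: mat_prod_list_def)

lemma dim_le_mat_trace_mat_prod_list_rev:
  fixes Es :: "complex mat list"
  assumes Es: "\<forall>E \<in> set Es. E \<in> carrier_mat n n \<and> mat_adjoint E = E \<and> det E = 1"
  shows "of_nat n \<le> mat_trace (mat_prod_list n Es * mat_prod_list n (rev Es))"
proof -
  define M where "M = mat_prod_list n Es"
  have M: "M \<in> carrier_mat n n"
    unfolding M_def using Es by (intro mat_prod_list_carrier) auto
  have rev: "mat_prod_list n (rev Es) = mat_adjoint M"
    unfolding M_def using Es by (intro mat_prod_list_rev_hermitian) auto
  have det_one: "det (mat_prod_list n Fs) = 1" if "set Fs \<subseteq> set Es" for Fs
    using that Es by (simp add: det_mat_prod_list subset_iff) (induction Fs; simp)
  have "det M = 1"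
    unfolding M_def by (simp add: det_one)
  moreover have "det (mat_adjoint M) = 1"
    unfolding rev[symmetric] by (simp add: det_one)
  ultimately have "det (M * mat_adjoint M) = 1"
    by (simp add: det_mult[OF M mat_adjoint_carrier[OF M]])
  then show ?thesis
    unfolding rev M_def[symmetric] using M
    by (intro dim_le_mat_trace_of_det_1 eigenvalue_mult_mat_adjoint_nonneg) auto
qed

theorem mainTheorem2:
  fixes n J :: nat and \<tau> :: real and P :: "nat \<Rightarrow> complex mat"
  assumes "n \<ge> 1"
    and "\<forall>j\<in>{1..J}. \<exists>s \<sigma>. length s = n \<and> s \<noteq> replicate n PI \<and> \<sigma> \<in> {1, -1::complex}
                          \<and> P j = \<sigma> \<cdot>\<^sub>m pauli_string s"
  shows "let E = (\<lambda>j. mat_exp (complex_of_real (- \<tau>) \<cdot>\<^sub>m P j));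
             A = mat_prod_list (2^n) (map E [1..<J+1]) * 1\<^sub>m (2^n)
                 * mat_prod_list (2^n) (map E (rev [1..<J+1]))
         in mat_trace A \<in> \<real> \<and> Re (mat_trace A) \<ge> 2 ^ n"
proof -
  define E where "E j = mat_exp (complex_of_real (- \<tau>) \<cdot>\<^sub>m P j)" for j
  define Es where "Es = map E [1..<J+1]"
  have "\<forall>A \<in> set Es. A \<in> carrier_mat (2 ^ n) (2 ^ n) \<and> mat_adjoint A = A \<and> det A = 1"
  proof
    fix A assume "A \<in> set Es"
    then obtain j where j: "j \<in> set [1..<J+1]" and A: "A = E j" unfolding Es_def by auto
    from j have "j \<in> {1..J}" by auto
    then obtain s \<sigma> where s: "length s = n" "s \<noteq> replicate n PI" and \<sigma>: "\<sigma> \<in> {1, -1}"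
      and Pj: "P j = \<sigma> \<cdot>\<^sub>m pauli_string s"
      using assms(2) by blast
    note Pj_facts = signed_pauli_string[OF \<sigma>, of s, folded Pj, unfolded s(1)]
    show "A \<in> carrier_mat (2 ^ n) (2 ^ n) \<and> mat_adjoint A = A \<and> det A = 1"
      using mat_exp_smult_hermitian_traceless_involution[OF Pj_facts(1-3) Pj_facts(4)[OF s(2)], of "- \<tau>"]
      unfolding A E_def by blast
  qed
  then have "of_nat (2 ^ n) \<le> mat_trace (mat_prod_list (2 ^ n) Es * mat_prod_list (2 ^ n) (rev Es))"
    by (rule dim_le_mat_trace_mat_prod_list_rev)
  then show ?thesis
    unfolding Let_def E_def[symmetric] rev_map[symmetric] Es_def[symmetric]
    by (simp add: less_eq_complex_def complex_is_Real_iff)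
qed

end
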